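(* For each $f\in\mathcal{G}_0$, the function $u:\mathcal{G}_0\to\mathbb{R}$, $u(g)=\langle f,g\rangle_{L^2([0,1])}=\int_0^1f(t)g(t)dt$, belongs to $\mathrm{Dom}(\mathbb{E})$.
   Context: $\mathcal{G}_0$ is the set of right continuous nondecreasing maps $g:[0,1[\,\to[0,1]$ extended by $g(1):=1$. Fix $\beta>0$; $\mathbb{Q}_0^\beta$ is the probability measure on $\mathcal{G}_0$ such that for every $N$ and $0=t_0<\dots<t_{N+1}=1$ the law of $(g(t_1),\dots,g(t_N))$ is $\frac{\Gamma(\beta)}{\prod_{i=0}^{N}\Gamma(\beta(t_{i+1}-t_i))}\prod_{i=0}^{N}(x_{i+1}-x_i)^{\beta(t_{i+1}-t_i)-1}dx$ on $\{0<x_1<\dots<x_N<1\}$, $x_0:=0,x_{N+1}:=1$. $\mathfrak{Z}^1(\mathcal{G}_0)$: functions $u(g)=U(\int_0^1\vec\alpha(g_s)ds)$ with $U\in\mathcal{C}^1(\mathbb{R}^m)$, $\vec\alpha\in\mathcal{C}^1([0,1],\mathbb{R}^m)$, and $\mathbb{D}u(g)=\sum_i\partial_iU(\int\vec\alpha(g_s)ds)\alpha_i'(g(\cdot))$. $(\mathbb{E},\mathrm{Dom}(\mathbb{E}))$ is the closure in $L^2(\mathcal{G}_0,\mathbb{Q}_0^\beta)$ of the (closable) form $\mathbb{E}(u,v)=\int\langle\mathbb{D}u(g),\mathbb{D}v(g)\rangle_{L^2([0,1])}d\mathbb{Q}_0^\beta(g)$ on $\mathfrak{Z}^1(\mathcal{G}_0)$.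 *)

theory Defs
  imports "HOL-Probability.Probability"
begin

text \<open>The space G_0: right continuous nondecreasing g on [0,1) with values in [0,1],
  g 1 = 1; convention: g t = 0 outside [0,1] (canonical representative).\<close>
definition G0 :: "(real \<Rightarrow> real) set" where
  "G0 = {g. (\<forall>s t. 0 \<le> s \<longrightarrow> s \<le> t \<longrightarrow> t < 1 \<longrightarrow> g s \<le> g t)
          \<and> (\<forall>t\<in>{0..<1}. continuous (at_right t) g)
          \<and> (\<forall>t\<in>{0..<1}. g t \<in> {0..1})
          \<and> g 1 = 1
          \<and> (\<forall>t. t \<notin> {0..1} \<longrightarrow> g t = 0)}"

definition xext :: "nat \<Rightarrow> (nat \<Rightarrow> real) \<Rightarrow> nat \<Rightarrow> real" where
  "xext N x i = (if i = 0 then 0 else if i = Suc N then 1 else x i)"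

text \<open>Finite dimensional (Dirichlet) density of (g(t_1),...,g(t_N)).\<close>
definition dir_density :: "real \<Rightarrow> nat \<Rightarrow> (nat \<Rightarrow> real) \<Rightarrow> (nat \<Rightarrow> real) \<Rightarrow> real" where
  "dir_density \<beta> N t x =
     (if (\<forall>i\<le>N. xext N x i < xext N x (Suc i))
      then Gamma \<beta> / (\<Prod>i\<le>N. Gamma (\<beta> * (t (Suc i) - t i)))
           * (\<Prod>i\<le>N. (xext N x (Suc i) - xext N x i) powr (\<beta> * (t (Suc i) - t i) - 1))
      else 0)"

definition is_Q0 :: "real \<Rightarrow> (real \<Rightarrow> real) measure \<Rightarrow> bool" where
  "is_Q0 \<beta> Q \<longleftrightarrow> prob_space Q \<and> space Q = G0
     \<and> sets Q = sets (restrict_space (Pi\<^sub>M UNIV (\<lambda>_. (borel :: real measure))) G0)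
     \<and> (\<forall>N t. t 0 = 0 \<and> t (Suc N) = 1 \<and> (\<forall>i\<le>N. t i < t (Suc i)) \<longrightarrow>
          distr Q (Pi\<^sub>M {1..N} (\<lambda>_. lborel)) (\<lambda>g. \<lambda>i\<in>{1..N}. g (t i))
          = density (Pi\<^sub>M {1..N} (\<lambda>_. lborel)) (\<lambda>x. ennreal (dir_density \<beta> N t x)))"

text \<open>R^m represented as functions nat => real vanishing from index m on.\<close>
definition Rm :: "nat \<Rightarrow> (nat \<Rightarrow> real) set" where
  "Rm m = {x. \<forall>i\<ge>m. x i = 0}"

definition partial_i :: "((nat \<Rightarrow> real) \<Rightarrow> real) \<Rightarrow> (nat \<Rightarrow> real) \<Rightarrow> nat \<Rightarrow> real" where
  "partial_i U x i = deriv (\<lambda>h. U (x(i := h))) (x i)"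

definition C1_Rm :: "nat \<Rightarrow> ((nat \<Rightarrow> real) \<Rightarrow> real) \<Rightarrow> bool" where
  "C1_Rm m U \<longleftrightarrow> (\<forall>i<m. \<forall>x\<in>Rm m. (\<lambda>h. U (x(i := h))) differentiable (at (x i)))
                 \<and> (\<forall>i<m. continuous_on (Rm m) (\<lambda>x. partial_i U x i))"

definition Z1_rep :: "nat \<Rightarrow> ((nat \<Rightarrow> real) \<Rightarrow> real) \<Rightarrow> (nat \<Rightarrow> real \<Rightarrow> real) \<Rightarrow> bool" where
  "Z1_rep m U \<alpha> \<longleftrightarrow> C1_Rm m U \<and> (\<forall>i<m. \<alpha> i C1_differentiable_on {0..1})"

definition z1_vec :: "nat \<Rightarrow> (nat \<Rightarrow> real \<Rightarrow> real) \<Rightarrow> (real \<Rightarrow> real) \<Rightarrow> nat \<Rightarrow> real" where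
  "z1_vec m \<alpha> g = (\<lambda>i. if i < m then integral {0..1} (\<lambda>s. \<alpha> i (g s)) else 0)"

definition z1_fun :: "nat \<Rightarrow> ((nat \<Rightarrow> real) \<Rightarrow> real) \<Rightarrow> (nat \<Rightarrow> real \<Rightarrow> real) \<Rightarrow> (real \<Rightarrow> real) \<Rightarrow> real" where
  "z1_fun m U \<alpha> g = U (z1_vec m \<alpha> g)"

definition z1_grad :: "nat \<Rightarrow> ((nat \<Rightarrow> real) \<Rightarrow> real) \<Rightarrow> (nat \<Rightarrow> real \<Rightarrow> real) \<Rightarrow> (real \<Rightarrow> real) \<Rightarrow> real \<Rightarrow> real" where
  "z1_grad m U \<alpha> g t = (\<Sum>i<m. partial_i U (z1_vec m \<alpha> g) i * deriv (\<alpha> i) (g t))"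

text \<open>Domain of the closure of the form in L^2(Q).\<close>
definition Dom_E :: "(real \<Rightarrow> real) measure \<Rightarrow> ((real \<Rightarrow> real) \<Rightarrow> real) set" where
  "Dom_E Q = {u. u \<in> borel_measurable Q \<and> (\<integral>\<^sup>+ g. ennreal ((u g)\<^sup>2) \<partial>Q) < \<infinity>
     \<and> (\<exists>m U \<alpha>. (\<forall>n. Z1_rep (m n) (U n) (\<alpha> n))
          \<and> (\<lambda>n. \<integral>\<^sup>+ g. ennreal ((z1_fun (m n) (U n) (\<alpha> n) g - u g)\<^sup>2) \<partial>Q) \<longlonglongrightarrow> 0
          \<and> (\<forall>\<epsilon>>0. \<exists>N. \<forall>n\<ge>N. \<forall>k\<ge>N.
               (\<integral>\<^sup>+ g. ennreal (integral {0..1}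
                   (\<lambda>t. (z1_grad (m n) (U n) (\<alpha> n) g t - z1_grad (m k) (U k) (\<alpha> k) g t)\<^sup>2)) \<partial>Q)
               < \<epsilon>))}"

end

theory Submission
  imports Defs
begin

text \<open>
  The functional \<open>u g = \<langle>f, g\<rangle>\<close> is approximated uniformly on \<open>G\<^sub>0\<close> by elements of \<open>Z\<^sup>1\<close> with
  uniformly bounded gradients. For a \<open>C\<^sup>1\<close> step \<open>\<alpha>\<^sub>i\<close> from \<open>1\<close> to \<open>0\<close> across the level \<open>i / n\<close>, the number
  \<open>T\<^sub>i g = \<integral>\<^sub>0\<^sup>1 \<alpha>\<^sub>i (g s) ds\<close> is the time at which the nondecreasing path \<open>g\<close> passes this level, so that
  \<open>#{i. T\<^sub>i g \<le> t} = n g t + O(1)\<close>. With \<open>\<Psi> y = \<integral>\<^sub>y\<^sup>1 f\<close>, smoothed at scale \<open>1 / n\<close>, the element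
  \<open>u\<^sub>n g = n\<^sup>-\<^sup>1 \<Sum>\<^sub>i \<Psi> (T\<^sub>i g)\<close> of \<open>Z\<^sup>1\<close> is within \<open>3 / n\<close> of \<open>u g\<close>, and its gradient is bounded by \<open>3 / 2\<close>.

  The gradients need not converge, but bounded energy suffices: the uniform approximants of accuracy
  \<open>1 / N\<close> form sets decreasing in \<open>N\<close> and closed under averaging (the average of two elements of \<open>Z\<^sup>1\<close>
  is again one), so by the parallelogram law near-minimisers of the energy have gradients that are
  Cauchy in \<open>L\<^sup>2(Q \<otimes> dt)\<close>.
\<close>

section \<open>Paths in \<open>G\<^sub>0\<close> and tools from real analysis\<close>

lemma G0_mono:
  assumes "g \<in> G0" "0 \<le> s" "s \<le> t" "t \<le> 1"
  shows "g s \<le> g t"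
proof -
  have "t < 1 \<or> t = 1" "s < 1 \<or> s = t" using assms by auto
  thus ?thesis using assms unfolding G0_def by auto
qed

lemma G0_range:
  assumes "g \<in> G0"
  shows G0_nonneg: "0 \<le> g t" and G0_le_1: "g t \<le> 1"
proof -
  have "g t \<in> {0..1}" using assms unfolding G0_def
    by (cases "t \<in> {0..<1}"; cases "t = 1") auto
  thus "0 \<le> g t" "g t \<le> 1" by auto
qed

lemma G0_abs_le_1: "g \<in> G0 \<Longrightarrow> \<bar>g t\<bar> \<le> 1"
  using G0_range[of g t] by simp

lemma G0_right_continuous: "g \<in> G0 \<Longrightarrow> 0 \<le> t \<Longrightarrow> t < 1 \<Longrightarrow> continuous (at_right t) g"
  unfolding G0_def by auto

lemma G0_at_1: "g \<in> G0 \<Longrightarrow> g 1 = 1"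
  unfolding G0_def by auto

lemma G0_outside: "g \<in> G0 \<Longrightarrow> t \<notin> {0..1} \<Longrightarrow> g t = 0"
  unfolding G0_def by auto

lemma G0_borel_measurable:
  assumes g: "g \<in> G0"
  shows "g \<in> borel_measurable borel"
proof -
  define c where "c t = max 0 (min 1 t)" for t :: real
  have "mono (\<lambda>t. g (c t))"
    by (rule monoI) (auto simp: c_def intro!: G0_mono[OF g])
  hence "(\<lambda>t. indicator {0..1} t * g (c t)) \<in> borel_measurable borel"
    by (intro borel_measurable_times borel_measurable_mono borel_measurable_indicator) auto
  moreover have "(\<lambda>t. indicator {0..1} t * g (c t)) = g"
    using G0_outside[OF g] by (auto simp: c_def indicator_def)
  ultimately show ?thesis by simp
qed

lemma integrable_on_Icc_if_bounded_measurable: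
  fixes h :: "real \<Rightarrow> real"
  assumes "h \<in> borel_measurable borel" "\<And>t. t \<in> {a..b} \<Longrightarrow> \<bar>h t\<bar> \<le> B"
  shows "h integrable_on {a..b}"
proof -
  have "set_integrable lborel {a..b} h" unfolding set_integrable_def
    by (rule integrableI_bounded_set_indicator[where B=B]) (use assms in \<open>auto simp: emeasure_lborel_Icc_eq\<close>)
  thus ?thesis by (rule set_borel_integral_eq_integral(1))
qed

lemma abs_integral_Icc_le:
  fixes h :: "real \<Rightarrow> real"
  assumes "h integrable_on {a..b}" "a \<le> b" "\<And>t. t \<in> {a..b} \<Longrightarrow> \<bar>h t\<bar> \<le> B"
  shows "\<bar>integral {a..b} h\<bar> \<le> B * (b - a)"
proof -
  have "0 \<le> B" using assms(2) assms(3)[of a] by auto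
  hence "norm (integral (cbox a b) h) \<le> B * Henstock_Kurzweil_Integration.content (cbox a b)"
    by (rule has_integral_bound) (use assms in \<open>auto simp: has_integral_integral\<close>)
  thus ?thesis using assms(2) by simp
qed

lemma
  fixes D :: "'a \<Rightarrow> real \<Rightarrow> real"
  assumes D: "(\<lambda>(x, t). D x t) \<in> borel_measurable (M \<Otimes>\<^sub>M lborel)"
    and bound: "\<And>x t. x \<in> space M \<Longrightarrow> \<bar>D x t\<bar> \<le> B"
  shows integrable_on_Icc_section: "x \<in> space M \<Longrightarrow> D x integrable_on {a..b}"
    and borel_measurable_integral_Icc_section: "(\<lambda>x. integral {a..b} (D x)) \<in> borel_measurable M"
proof -
  have si: "set_integrable lborel {a..b} (D x)" if "x \<in> space M" for x
    unfolding set_integrable_def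
    using measurable_Pair2[OF D that] bound[OF that]
    by (intro integrableI_bounded_set_indicator[where B=B]) (auto simp: emeasure_lborel_Icc_eq)
  show "D x integrable_on {a..b}" if "x \<in> space M" for x
    using set_borel_integral_eq_integral(1)[OF si[OF that]] .
  have "(\<lambda>x. \<integral>t. indicator {a..b} t *\<^sub>R D x t \<partial>lborel) \<in> borel_measurable M"
    using D by measurable
  thus "(\<lambda>x. integral {a..b} (D x)) \<in> borel_measurable M"
    by (rule measurable_cong[THEN iffD1, rotated])
       (use set_borel_integral_eq_integral(2)[OF si] in \<open>simp add: set_lebesgue_integral_def\<close>)
qed

lemma tendsto_right_grid_point:
  fixes g :: "real \<Rightarrow> real"
  assumes "continuous (at_right t) g"
  shows "(\<lambda>k. g (\<lceil>real (Suc k) * t\<rceil> / real (Suc k))) \<longlonglongrightarrow> g t"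
proof (rule continuous_within_tendsto_compose'[where S="{t..}" and f=g and a=t])
  have "{t..} - {t} = {t<..} - {t}" by auto
  hence "at t within {t..} = at_right t" by (simp add: at_within_def)
  thus "continuous (at t within {t..}) g" using assms by simp
  have lower: "t \<le> \<lceil>real (Suc k) * t\<rceil> / real (Suc k)" for k
    using le_of_int_ceiling[of "real (Suc k) * t"] by (simp add: le_divide_eq mult.commute)
  thus "\<lceil>real (Suc k) * t\<rceil> / real (Suc k) \<in> {t..}" for k by simp
  have upper: "\<lceil>real (Suc k) * t\<rceil> / real (Suc k) \<le> t + 1 / real (Suc k)" for k
  proof -
    have "real_of_int \<lceil>real (Suc k) * t\<rceil> \<le> real (Suc k) * t + 1"
      using ceiling_correct[of "real (Suc k) * t"] by linarith
    hence "real_of_int \<lceil>real (Suc k) * t\<rceil> / real (Suc k) \<le> (real (Suc k) * t + 1) / real (Suc k)"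
      by (intro divide_right_mono) auto
    thus ?thesis by (simp add: add_divide_distrib)
  qed
  have lim: "(\<lambda>k. t + 1 / real (Suc k)) \<longlonglongrightarrow> t"
    using tendsto_add[OF tendsto_const LIMSEQ_Suc[OF lim_inverse_n']] by simp
  show "(\<lambda>k. \<lceil>real (Suc k) * t\<rceil> / real (Suc k)) \<longlonglongrightarrow> t"
    by (rule tendsto_sandwich[OF _ _ tendsto_const lim]) (use lower upper in auto)
qed

lemma has_real_derivative_window_integral:
  fixes h :: "real \<Rightarrow> real"
  assumes hc: "continuous_on UNIV h" and L: "0 \<le> L"
  shows "((\<lambda>y. integral {y - L..y} h) has_real_derivative (h y - h (y - L))) (at y)"
proof -
  define a where "a = y - L - 1"
  have F: "((\<lambda>x. integral {a..x} h) has_real_derivative h x) (at x)" if "a < x" "x < y + 1" for x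
    using integral_has_real_derivative[OF continuous_on_subset[OF hc], of a "y + 1" x] that
      at_within_Icc_at[OF that] by auto
  have "((\<lambda>x. integral {a..x - L} h) has_real_derivative h (y - L) * 1) (at y)"
    using L by (intro DERIV_chain2[of "\<lambda>x. integral {a..x} h", OF F])
               (auto simp: a_def intro!: derivative_eq_intros)
  from DERIV_diff[OF F this]
  have "((\<lambda>x. integral {a..x} h - integral {a..x - L} h) has_real_derivative (h y - h (y - L))) (at y)"
    using L by (simp add: a_def)
  thus ?thesis
  proof (rule has_field_derivative_transform_within_open[where S="ball y 1"])
    fix z assume "z \<in> ball y 1"
    hence z: "a \<le> z - L" "z - L \<le> z" using L by (auto simp: a_def dist_real_def)
    have "h integrable_on {a..z}" by (intro integrable_continuous_real continuous_on_subset[OF hc]) auto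
    from Henstock_Kurzweil_Integration.integral_combine[OF z this]
    show "integral {a..z} h - integral {a..z - L} h = integral {z - L..z} h" by simp
  qed auto
qed

lemma integral_square_nonneg: "0 \<le> integral S (\<lambda>t. (h t)\<^sup>2 :: real)"
  by (cases "(\<lambda>t. (h t)\<^sup>2) integrable_on S") (auto intro: integral_nonneg simp: not_integrable_integral)

lemma
  fixes a b :: real
  shows integrable_on_indicator_01: "(\<lambda>t. if t \<in> {a..b} then 1 else 0 :: real) integrable_on {0..1}"
    and integral_indicator_01_le: "a \<le> b \<Longrightarrow> integral {0..1} (\<lambda>t. if t \<in> {a..b} then 1 else 0 :: real) \<le> b - a"
    and integral_indicator_01: "0 \<le> a \<Longrightarrow> a \<le> b \<Longrightarrow> b \<le> 1 \<Longrightarrow>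
      integral {0..1} (\<lambda>t. if t \<in> {a..b} then 1 else 0 :: real) = b - a"
proof -
  have eq: "{a..b} \<inter> {0..1} = {max a 0..min b 1}" by auto
  show "(\<lambda>t. if t \<in> {a..b} then 1 else 0 :: real) integrable_on {0..1}"
    unfolding integrable_restrict_Int eq by (intro integrable_continuous_real continuous_on_const)
  show "a \<le> b \<Longrightarrow> integral {0..1} (\<lambda>t. if t \<in> {a..b} then 1 else 0 :: real) \<le> b - a"
    and "0 \<le> a \<Longrightarrow> a \<le> b \<Longrightarrow> b \<le> 1 \<Longrightarrow> integral {0..1} (\<lambda>t. if t \<in> {a..b} then 1 else 0 :: real) = b - a"
    unfolding integral_restrict_Int eq by auto
qed

section \<open>Averages in \<open>Z\<^sup>1\<close>\<close>

text \<open>Averaging two elements of \<open>Z\<^sup>1\<close>: concatenate their coordinate maps \<open>\<alpha>\<close> and let each outer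
  function read its own block of coordinates.\<close>

definition vec_prefix :: "nat \<Rightarrow> (nat \<Rightarrow> real) \<Rightarrow> nat \<Rightarrow> real" where
  "vec_prefix m y = (\<lambda>i. if i < m then y i else 0)"

definition vec_block :: "nat \<Rightarrow> nat \<Rightarrow> (nat \<Rightarrow> real) \<Rightarrow> nat \<Rightarrow> real" where
  "vec_block m1 m2 y = (\<lambda>i. if i < m2 then y (i + m1) else 0)"

definition mid_U :: "nat \<Rightarrow> nat \<Rightarrow> ((nat \<Rightarrow> real) \<Rightarrow> real) \<Rightarrow> ((nat \<Rightarrow> real) \<Rightarrow> real) \<Rightarrow> (nat \<Rightarrow> real) \<Rightarrow> real" where
  "mid_U m1 m2 U1 U2 = (\<lambda>y. (U1 (vec_prefix m1 y) + U2 (vec_block m1 m2 y)) / 2)"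

definition append_alpha :: "nat \<Rightarrow> (nat \<Rightarrow> real \<Rightarrow> real) \<Rightarrow> (nat \<Rightarrow> real \<Rightarrow> real) \<Rightarrow> nat \<Rightarrow> real \<Rightarrow> real" where
  "append_alpha m1 a1 a2 = (\<lambda>i. if i < m1 then a1 i else a2 (i - m1))"

lemma vec_prefix_in_Rm: "vec_prefix m y \<in> Rm m"
  unfolding vec_prefix_def Rm_def by auto

lemma vec_block_in_Rm: "vec_block m1 m2 y \<in> Rm m2"
  unfolding vec_block_def Rm_def by auto

lemma vec_prefix_z1_vec: "vec_prefix m1 (z1_vec (m1 + m2) (append_alpha m1 a1 a2) g) = z1_vec m1 a1 g"
  unfolding vec_prefix_def z1_vec_def append_alpha_def by auto

lemma vec_block_z1_vec: "vec_block m1 m2 (z1_vec (m1 + m2) (append_alpha m1 a1 a2) g) = z1_vec m2 a2 g"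
  unfolding vec_block_def z1_vec_def append_alpha_def by auto

lemma continuous_on_vec_prefix: "continuous_on S (vec_prefix m)"
  unfolding vec_prefix_def
proof (intro continuous_on_coordinatewise_then_product)
  fix i show "continuous_on S (\<lambda>x. if i < m then x i else 0)"
    by (cases "i < m") (auto intro: continuous_on_subset[OF continuous_on_product_coordinates])
qed

lemma continuous_on_vec_block: "continuous_on S (vec_block m1 m2)"
  unfolding vec_block_def
proof (intro continuous_on_coordinatewise_then_product)
  fix i show "continuous_on S (\<lambda>x. if i < m2 then x (i + m1) else 0)"
    by (cases "i < m2") (auto intro: continuous_on_subset[OF continuous_on_product_coordinates])
qed

lemma z1_fun_mid:
  "z1_fun (m1 + m2) (mid_U m1 m2 U1 U2) (append_alpha m1 a1 a2) g = (z1_fun m1 U1 a1 g + z1_fun m2 U2 a2 g) / 2"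
  unfolding z1_fun_def mid_U_def by (simp add: vec_prefix_z1_vec vec_block_z1_vec)

lemma half_shift_deriv:
  fixes F :: "real \<Rightarrow> real"
  assumes "F differentiable (at a)"
  shows "(\<lambda>h. (c + F h) / 2) differentiable (at a)" and "deriv (\<lambda>h. (c + F h) / 2) a = deriv F a / 2"
proof -
  have "(F has_real_derivative deriv F a) (at a)"
    using assms DERIV_deriv_iff_real_differentiable by blast
  hence "((\<lambda>h. (c + F h) / 2) has_real_derivative deriv F a / 2) (at a)"
    by (auto intro!: derivative_eq_intros)
  thus "(\<lambda>h. (c + F h) / 2) differentiable (at a)" "deriv (\<lambda>h. (c + F h) / 2) a = deriv F a / 2"
    using DERIV_imp_deriv real_differentiable_def by blast+
qed

lemma mid_U_partial_prefix:
  assumes "i < m1" "C1_Rm m1 U1"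
  shows "(\<lambda>h. mid_U m1 m2 U1 U2 (x(i := h))) differentiable (at (x i))"
    and "partial_i (mid_U m1 m2 U1 U2) x i = partial_i U1 (vec_prefix m1 x) i / 2"
proof -
  have e: "(\<lambda>h. mid_U m1 m2 U1 U2 (x(i := h))) = (\<lambda>h. (U2 (vec_block m1 m2 x) + U1 ((vec_prefix m1 x)(i := h))) / 2)"
  proof -
    have "vec_prefix m1 (x(i := h)) = (vec_prefix m1 x)(i := h)" "vec_block m1 m2 (x(i := h)) = vec_block m1 m2 x"
      for h using assms(1) by (auto simp: vec_prefix_def vec_block_def)
    thus ?thesis by (simp add: mid_U_def add.commute)
  qed
  have xi: "vec_prefix m1 x i = x i" using assms(1) unfolding vec_prefix_def by simp
  have "(\<lambda>h. U1 ((vec_prefix m1 x)(i := h))) differentiable (at (x i))"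
    using assms vec_prefix_in_Rm xi unfolding C1_Rm_def by metis
  from half_shift_deriv[OF this]
  show "(\<lambda>h. mid_U m1 m2 U1 U2 (x(i := h))) differentiable (at (x i))"
    and "partial_i (mid_U m1 m2 U1 U2) x i = partial_i U1 (vec_prefix m1 x) i / 2"
    unfolding partial_i_def e xi by auto
qed

lemma mid_U_partial_block:
  assumes "m1 \<le> i" "i < m1 + m2" "C1_Rm m2 U2"
  shows "(\<lambda>h. mid_U m1 m2 U1 U2 (x(i := h))) differentiable (at (x i))"
    and "partial_i (mid_U m1 m2 U1 U2) x i = partial_i U2 (vec_block m1 m2 x) (i - m1) / 2"
proof -
  have e: "(\<lambda>h. mid_U m1 m2 U1 U2 (x(i := h))) = (\<lambda>h. (U1 (vec_prefix m1 x) + U2 ((vec_block m1 m2 x)(i - m1 := h))) / 2)"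
  proof -
    have "vec_prefix m1 (x(i := h)) = vec_prefix m1 x" "vec_block m1 m2 (x(i := h)) = (vec_block m1 m2 x)(i - m1 := h)"
      for h using assms(1,2) by (auto simp: vec_prefix_def vec_block_def fun_eq_iff)
    thus ?thesis by (simp add: mid_U_def)
  qed
  have xi: "vec_block m1 m2 x (i - m1) = x i" using assms(1,2) unfolding vec_block_def by simp
  have "(\<lambda>h. U2 ((vec_block m1 m2 x)(i - m1 := h))) differentiable (at (x i))"
    using assms vec_block_in_Rm xi unfolding C1_Rm_def by (metis less_diff_conv2 add.commute)
  from half_shift_deriv[OF this]
  show "(\<lambda>h. mid_U m1 m2 U1 U2 (x(i := h))) differentiable (at (x i))"
    and "partial_i (mid_U m1 m2 U1 U2) x i = partial_i U2 (vec_block m1 m2 x) (i - m1) / 2"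
    unfolding partial_i_def e xi by auto
qed

lemma Z1_rep_mid:
  assumes Z1: "Z1_rep m1 U1 a1" "Z1_rep m2 U2 a2"
  shows "Z1_rep (m1 + m2) (mid_U m1 m2 U1 U2) (append_alpha m1 a1 a2)"
proof -
  have C1: "C1_Rm m1 U1" "C1_Rm m2 U2" using Z1 unfolding Z1_rep_def by auto
  have "C1_Rm (m1 + m2) (mid_U m1 m2 U1 U2)"
    unfolding C1_Rm_def
  proof (intro conjI allI impI ballI)
    fix i x assume i: "i < m1 + m2"
    show "(\<lambda>h. mid_U m1 m2 U1 U2 (x(i := h))) differentiable (at (x i))"
      using mid_U_partial_prefix(1)[OF _ C1(1)] mid_U_partial_block(1)[OF _ i C1(2)] by (cases "i < m1") auto
  next
    fix i assume i: "i < m1 + m2"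
    show "continuous_on (Rm (m1 + m2)) (\<lambda>x. partial_i (mid_U m1 m2 U1 U2) x i)"
    proof (cases "i < m1")
      case True
      have "continuous_on (Rm m1) (\<lambda>x. partial_i U1 x i)" using C1(1) True unfolding C1_Rm_def by auto
      hence "continuous_on (Rm (m1 + m2)) (\<lambda>x. partial_i U1 (vec_prefix m1 x) i / 2)"
        by (intro continuous_intros continuous_on_compose2[OF _ continuous_on_vec_prefix])
           (auto simp: vec_prefix_in_Rm)
      thus ?thesis by (rule continuous_on_eq) (simp add: mid_U_partial_prefix(2)[OF True C1(1)])
    next
      case False
      have "continuous_on (Rm m2) (\<lambda>x. partial_i U2 x (i - m1))" using C1(2) False i unfolding C1_Rm_def by auto
      hence "continuous_on (Rm (m1 + m2)) (\<lambda>x. partial_i U2 (vec_block m1 m2 x) (i - m1) / 2)"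
        by (intro continuous_intros continuous_on_compose2[OF _ continuous_on_vec_block])
           (auto simp: vec_block_in_Rm)
      thus ?thesis by (rule continuous_on_eq) (use mid_U_partial_block(2)[OF _ i C1(2)] False in simp)
    qed
  qed
  moreover have "\<forall>i<m1 + m2. append_alpha m1 a1 a2 i C1_differentiable_on {0..1}"
    using Z1 unfolding Z1_rep_def append_alpha_def by auto
  ultimately show ?thesis unfolding Z1_rep_def by auto
qed

lemma z1_grad_mid:
  assumes "Z1_rep m1 U1 a1" "Z1_rep m2 U2 a2"
  shows "z1_grad (m1 + m2) (mid_U m1 m2 U1 U2) (append_alpha m1 a1 a2) g t
    = (z1_grad m1 U1 a1 g t + z1_grad m2 U2 a2 g t) / 2"
proof -
  have C1: "C1_Rm m1 U1" "C1_Rm m2 U2" using assms unfolding Z1_rep_def by auto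
  let ?v = "z1_vec (m1 + m2) (append_alpha m1 a1 a2) g"
  let ?F = "\<lambda>i. partial_i (mid_U m1 m2 U1 U2) ?v i * deriv (append_alpha m1 a1 a2 i) (g t)"
  have "(\<Sum>i<m1 + m2. F i) = (\<Sum>i<m1. F i) + (\<Sum>i<m2. F (m1 + i))" for F :: "nat \<Rightarrow> real"
    by (induction m2) (simp_all add: add.assoc)
  hence "(\<Sum>i<m1 + m2. ?F i) = (\<Sum>i<m1. ?F i) + (\<Sum>i<m2. ?F (m1 + i))" .
  also have "(\<Sum>i<m1. ?F i) = (\<Sum>i<m1. partial_i U1 (z1_vec m1 a1 g) i * deriv (a1 i) (g t)) / 2"
    unfolding sum_divide_distrib
    by (intro sum.cong refl) (simp add: mid_U_partial_prefix(2)[OF _ C1(1)] vec_prefix_z1_vec, simp add: append_alpha_def)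
  also have "(\<Sum>i<m2. ?F (m1 + i)) = (\<Sum>i<m2. partial_i U2 (z1_vec m2 a2 g) i * deriv (a2 i) (g t)) / 2"
    unfolding sum_divide_distrib
    by (intro sum.cong refl) (simp add: mid_U_partial_block(2)[OF _ _ C1(2)] vec_block_z1_vec, simp add: append_alpha_def)
  finally show ?thesis unfolding z1_grad_def by (simp add: add_divide_distrib)
qed

type_synonym z1_rep = "nat \<times> ((nat \<Rightarrow> real) \<Rightarrow> real) \<times> (nat \<Rightarrow> real \<Rightarrow> real)"

definition rep_fun :: "z1_rep \<Rightarrow> (real \<Rightarrow> real) \<Rightarrow> real" where
  "rep_fun r = z1_fun (fst r) (fst (snd r)) (snd (snd r))"

definition rep_grad :: "z1_rep \<Rightarrow> (real \<Rightarrow> real) \<Rightarrow> real \<Rightarrow> real" where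
  "rep_grad r = z1_grad (fst r) (fst (snd r)) (snd (snd r))"

definition rep_mid :: "z1_rep \<Rightarrow> z1_rep \<Rightarrow> z1_rep" where
  "rep_mid r1 r2 = (fst r1 + fst r2, mid_U (fst r1) (fst r2) (fst (snd r1)) (fst (snd r2)),
     append_alpha (fst r1) (snd (snd r1)) (snd (snd r2)))"

lemma
  assumes "Z1_rep (fst r1) (fst (snd r1)) (snd (snd r1))" "Z1_rep (fst r2) (fst (snd r2)) (snd (snd r2))"
  shows Z1_rep_rep_mid: "Z1_rep (fst (rep_mid r1 r2)) (fst (snd (rep_mid r1 r2))) (snd (snd (rep_mid r1 r2)))"
    and rep_fun_mid: "rep_fun (rep_mid r1 r2) g = (rep_fun r1 g + rep_fun r2 g) / 2"
    and rep_grad_mid: "rep_grad (rep_mid r1 r2) g t = (rep_grad r1 g t + rep_grad r2 g t) / 2"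
  using Z1_rep_mid[OF assms] z1_fun_mid z1_grad_mid[OF assms]
  by (simp_all add: rep_mid_def rep_fun_def rep_grad_def)

section \<open>A criterion for membership in \<open>Dom(E)\<close>\<close>

lemma minimizing_sequence_cauchy:
  fixes E :: "'r \<Rightarrow> real" and d :: "'r \<Rightarrow> 'r \<Rightarrow> real" and T :: "nat \<Rightarrow> 'r set"
  assumes nonempty: "\<And>N. T N \<noteq> {}"
    and decseq: "\<And>N M. N \<le> M \<Longrightarrow> T M \<subseteq> T N"
    and mid_closed: "\<And>N r1 r2. r1 \<in> T N \<Longrightarrow> r2 \<in> T N \<Longrightarrow> mid r1 r2 \<in> T N"
    and parallelogram: "\<And>N r1 r2. r1 \<in> T N \<Longrightarrow> r2 \<in> T N \<Longrightarrow> d r1 r2 = 2 * E r1 + 2 * E r2 - 4 * E (mid r1 r2)"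
    and nonneg: "\<And>N r. r \<in> T N \<Longrightarrow> 0 \<le> E r"
    and bounded: "\<And>N. \<exists>r\<in>T N. E r \<le> C"
  obtains rr where "\<And>N. rr N \<in> T N" and "\<And>e. e > 0 \<Longrightarrow> \<exists>L. \<forall>n\<ge>L. \<forall>k\<ge>L. d (rr n) (rr k) < e"
proof -
  define m where "m N = Inf (E ` T N)" for N
  have bdd: "bdd_below (E ` T N)" for N using nonneg by (intro bdd_belowI[of _ 0]) auto
  have m_le: "m N \<le> E r" if "r \<in> T N" for N r
    unfolding m_def using bdd that by (intro cInf_lower) auto
  have "T (Suc N) \<subseteq> T N" for N by (rule decseq) simp
  hence "incseq m"
    unfolding m_def using nonempty bdd by (intro incseq_SucI cInf_superset_mono) (auto intro: image_mono)
  moreover have "bdd_above (range m)"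
    using bounded m_le by (intro bdd_aboveI[of _ C]) (fastforce intro: order.trans)
  ultimately have m_lim: "m \<longlonglongrightarrow> (SUP N. m N)" and m_sup: "m N \<le> (SUP N. m N)" for N
    by (auto intro: LIMSEQ_incseq_SUP cSUP_upper)
  define s where "s = (SUP N. m N)"
  have "\<exists>r\<in>T N. E r < m N + 1 / real (Suc N)" for N
    using cInf_lessD[of "E ` T N" "m N + 1 / real (Suc N)"] nonempty unfolding m_def by auto
  then obtain rr where rr: "\<And>N. rr N \<in> T N" "\<And>N. E (rr N) < m N + 1 / real (Suc N)"
    by metis
  define \<delta> where "\<delta> L = 1 / real (Suc L)" for L
  have near: "E (rr n) \<le> s + \<delta> L" if "L \<le> n" for n L
  proof -
    have "1 / real (Suc n) \<le> 1 / real (Suc L)" using that by (simp add: frac_le)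
    thus ?thesis using rr(2)[of n] m_sup[of n] unfolding s_def \<delta>_def by linarith
  qed
  have estimate: "d (rr n) (rr k) \<le> 4 * (s - m L) + 4 * \<delta> L" if "L \<le> n" "L \<le> k" for n k L
  proof -
    have "rr n \<in> T L" "rr k \<in> T L" using rr(1) decseq that by blast+
    hence "m L \<le> E (mid (rr n) (rr k))" "d (rr n) (rr k) = 2 * E (rr n) + 2 * E (rr k) - 4 * E (mid (rr n) (rr k))"
      using m_le mid_closed parallelogram by blast+
    thus ?thesis using near[OF that(1)] near[OF that(2)] by argo
  qed
  have "(\<lambda>L. 4 * (s - m L) + 4 * \<delta> L) \<longlonglongrightarrow> 4 * (s - s) + 4 * 0"
    unfolding s_def \<delta>_def using m_lim LIMSEQ_Suc[OF lim_inverse_n']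
    by (intro tendsto_intros) (auto simp: divide_inverse)
  hence lim: "(\<lambda>L. 4 * (s - m L) + 4 * \<delta> L) \<longlonglongrightarrow> 0" by simp
  have "\<exists>L. \<forall>n\<ge>L. \<forall>k\<ge>L. d (rr n) (rr k) < e" if e: "e > 0" for e
  proof -
    obtain L where "4 * (s - m L) + 4 * \<delta> L < e"
      using order_tendstoD(2)[OF lim e] by (auto simp: eventually_sequentially)
    thus ?thesis using estimate by (meson le_less_trans)
  qed
  with rr(1) show ?thesis using that by blast
qed

locale prob_on_G0 = prob_space Q for Q :: "(real \<Rightarrow> real) measure" +
  assumes space_eq: "space Q = G0"
    and sets_eq: "sets Q = sets (restrict_space (Pi\<^sub>M UNIV (\<lambda>_. (borel :: real measure))) G0)"
begin

lemma borel_measurable_evaluation: "(\<lambda>g. g x) \<in> borel_measurable Q"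
  by (subst measurable_cong_sets[OF sets_eq refl])
     (intro measurable_restrict_space1 measurable_component_singleton, simp)

text \<open>Joint measurability of \<open>(g, t) \<mapsto> g t\<close> comes from right continuity: \<open>g t\<close> is the limit of the
  values of \<open>g\<close> at the grid points just right of \<open>t\<close>, and each such value depends measurably on
  \<open>g\<close> and on the countably many choices of grid point.\<close>

lemma borel_measurable_eval_pair: "(\<lambda>(g, t). g t) \<in> borel_measurable (Q \<Otimes>\<^sub>M lborel)"
proof (rule borel_measurable_LIMSEQ_real)
  define grid where "grid k t = real_of_int \<lceil>real (Suc k) * t\<rceil> / real (Suc k)" for k t
  show "(\<lambda>(g, t). indicator {0..1} t * g (grid k t)) \<in> borel_measurable (Q \<Otimes>\<^sub>M lborel)" for k
  proof -
    have at_grid: "(\<lambda>x. indicator {0..1::real} (snd x) * fst x (real_of_int i / real (Suc k)))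
        \<in> borel_measurable (Q \<Otimes>\<^sub>M lborel)" for i :: int
      using measurable_compose[OF measurable_fst borel_measurable_evaluation]
      by (intro borel_measurable_times measurable_compose[OF measurable_snd borel_measurable_indicator]) auto
    have grid_index: "(\<lambda>x. \<lceil>real (Suc k) * snd x\<rceil>) \<in> measurable (Q \<Otimes>\<^sub>M lborel) (count_space UNIV)"
      by measurable
    from measurable_compose_countable[OF at_grid grid_index]
    show ?thesis unfolding grid_def by (simp add: case_prod_beta')
  qed
  fix x assume "x \<in> space (Q \<Otimes>\<^sub>M (lborel :: real measure))"
  then obtain g t where x: "x = (g, t)" and g: "g \<in> G0"
    by (auto simp: space_pair_measure space_eq)
  consider "t \<in> {0..<1}" | "t = 1" | "t \<notin> {0..1}" by fastforce
  hence "(\<lambda>k. indicator {0..1} t * g (grid k t)) \<longlonglongrightarrow> g t"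
  proof cases
    case 1
    thus ?thesis using tendsto_right_grid_point[OF G0_right_continuous[OF g]]
      by (simp add: grid_def)
  next
    case 2
    have "grid k 1 = 1" for k by (simp add: grid_def)
    thus ?thesis using 2 by simp
  qed (simp add: G0_outside[OF g])
  thus "(\<lambda>k. (\<lambda>(g, t). indicator {0..1} t * g (grid k t)) x) \<longlonglongrightarrow> (\<lambda>(g, t). g t) x"
    by (simp add: x)
qed

definition bounded_kernel :: "((real \<Rightarrow> real) \<Rightarrow> real \<Rightarrow> real) \<Rightarrow> bool" where
  "bounded_kernel D \<longleftrightarrow> (\<lambda>(g, t). D g t) \<in> borel_measurable (Q \<Otimes>\<^sub>M lborel)
     \<and> (\<exists>B. \<forall>g\<in>G0. \<forall>t. \<bar>D g t\<bar> \<le> B)"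

lemma bounded_kernelI:
  assumes "(\<lambda>(g, t). D g t) \<in> borel_measurable (Q \<Otimes>\<^sub>M lborel)" "\<And>g t. g \<in> G0 \<Longrightarrow> \<bar>D g t\<bar> \<le> B"
  shows "bounded_kernel D"
  using assms unfolding bounded_kernel_def by blast

lemma bounded_kernelE:
  assumes "bounded_kernel D"
  obtains B where "(\<lambda>(g, t). D g t) \<in> borel_measurable (Q \<Otimes>\<^sub>M lborel)" "\<And>g t. g \<in> G0 \<Longrightarrow> \<bar>D g t\<bar> \<le> B"
  using assms unfolding bounded_kernel_def by blast

lemma bounded_kernel_add:
  assumes "bounded_kernel D1" "bounded_kernel D2"
  shows "bounded_kernel (\<lambda>g t. D1 g t + D2 g t)"
proof -
  obtain B1 B2 where "(\<lambda>(g, t). D1 g t) \<in> borel_measurable (Q \<Otimes>\<^sub>M lborel)" "\<And>g t. g \<in> G0 \<Longrightarrow> \<bar>D1 g t\<bar> \<le> B1"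
    "(\<lambda>(g, t). D2 g t) \<in> borel_measurable (Q \<Otimes>\<^sub>M lborel)" "\<And>g t. g \<in> G0 \<Longrightarrow> \<bar>D2 g t\<bar> \<le> B2"
    using assms by (metis bounded_kernelE)
  thus ?thesis
    by (intro bounded_kernelI[where B="B1 + B2"])
       (auto simp: case_prod_beta' intro!: order_trans[OF abs_triangle_ineq add_mono])
qed

lemma bounded_kernel_mult:
  assumes "bounded_kernel D1" "bounded_kernel D2"
  shows "bounded_kernel (\<lambda>g t. D1 g t * D2 g t)"
proof -
  obtain B1 B2 where "(\<lambda>(g, t). D1 g t) \<in> borel_measurable (Q \<Otimes>\<^sub>M lborel)" "\<And>g t. g \<in> G0 \<Longrightarrow> \<bar>D1 g t\<bar> \<le> B1"
    "(\<lambda>(g, t). D2 g t) \<in> borel_measurable (Q \<Otimes>\<^sub>M lborel)" "\<And>g t. g \<in> G0 \<Longrightarrow> \<bar>D2 g t\<bar> \<le> B2"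
    using assms by (metis bounded_kernelE)
  thus ?thesis
    by (intro bounded_kernelI[where B="B1 * B2"]) (auto simp: case_prod_beta' abs_mult intro: mult_mono')
qed

lemma bounded_kernel_scale: "bounded_kernel D \<Longrightarrow> bounded_kernel (\<lambda>g t. c * D g t)"
  using bounded_kernel_mult[of "\<lambda>g t. c" D] bounded_kernelI[of "\<lambda>g t. c" "\<bar>c\<bar>"] by simp

lemma bounded_kernel_diff:
  assumes "bounded_kernel D1" "bounded_kernel D2"
  shows "bounded_kernel (\<lambda>g t. D1 g t - D2 g t)"
  using bounded_kernel_add[OF assms(1) bounded_kernel_scale[OF assms(2), of "- 1"]] by simp

lemma
  assumes "bounded_kernel D"
  shows bounded_kernel_integrable_on: "g \<in> G0 \<Longrightarrow> D g integrable_on {0..1}"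
    and borel_measurable_bounded_kernel_integral: "(\<lambda>g. integral {0..1} (D g)) \<in> borel_measurable Q"
    and integrable_bounded_kernel_integral: "integrable Q (\<lambda>g. integral {0..1} (D g))"
proof -
  obtain B where D: "(\<lambda>(g, t). D g t) \<in> borel_measurable (Q \<Otimes>\<^sub>M lborel)" "\<And>g t. g \<in> space Q \<Longrightarrow> \<bar>D g t\<bar> \<le> B"
    using assms space_eq by (metis bounded_kernelE)
  show "D g integrable_on {0..1}" if "g \<in> G0" for g
    using integrable_on_Icc_section[OF D] that space_eq by simp
  show m: "(\<lambda>g. integral {0..1} (D g)) \<in> borel_measurable Q"
    using borel_measurable_integral_Icc_section[OF D] .
  have "\<bar>integral {0..1} (D g)\<bar> \<le> B * (1 - 0)" if "g \<in> space Q" for g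
    using integrable_on_Icc_section[OF D that] D(2)[OF that] by (intro abs_integral_Icc_le) auto
  thus "integrable Q (\<lambda>g. integral {0..1} (D g))"
    using m by (intro integrable_const_bound[where B=B]) auto
qed

definition bounded_rep :: "z1_rep \<Rightarrow> bool" where
  "bounded_rep r \<longleftrightarrow> Z1_rep (fst r) (fst (snd r)) (snd (snd r)) \<and> bounded_kernel (rep_grad r)"

definition energy :: "z1_rep \<Rightarrow> real" where
  "energy r = (\<integral>g. integral {0..1} (\<lambda>t. (rep_grad r g t)\<^sup>2) \<partial>Q)"

definition grad_dist :: "z1_rep \<Rightarrow> z1_rep \<Rightarrow> real" where
  "grad_dist r1 r2 = (\<integral>g. integral {0..1} (\<lambda>t. (rep_grad r1 g t - rep_grad r2 g t)\<^sup>2) \<partial>Q)"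

lemma bounded_rep_mid:
  assumes "bounded_rep r1" "bounded_rep r2"
  shows "bounded_rep (rep_mid r1 r2)"
proof -
  have "rep_grad (rep_mid r1 r2) = (\<lambda>g t. (1 / 2) * (rep_grad r1 g t + rep_grad r2 g t))"
    using assms by (auto simp: bounded_rep_def rep_grad_mid fun_eq_iff)
  moreover have "bounded_kernel (\<lambda>g t. (1 / 2) * (rep_grad r1 g t + rep_grad r2 g t))"
    using assms unfolding bounded_rep_def by (intro bounded_kernel_scale bounded_kernel_add) auto
  ultimately show ?thesis using assms unfolding bounded_rep_def by (simp add: Z1_rep_rep_mid)
qed

lemma bounded_rep_grad_sq:
  assumes "bounded_rep r1" "bounded_rep r2"
  shows "bounded_kernel (\<lambda>g t. (rep_grad r1 g t)\<^sup>2)"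
    and "bounded_kernel (\<lambda>g t. (rep_grad r1 g t - rep_grad r2 g t)\<^sup>2)"
  using assms unfolding bounded_rep_def power2_eq_square
  by (auto intro!: bounded_kernel_mult bounded_kernel_diff)

lemma energy_nonneg: "0 \<le> energy r"
  unfolding energy_def by (simp add: Bochner_Integration.integral_nonneg integral_square_nonneg)

lemma grad_dist_parallelogram:
  assumes r: "bounded_rep r1" "bounded_rep r2"
  shows "grad_dist r1 r2 = 2 * energy r1 + 2 * energy r2 - 4 * energy (rep_mid r1 r2)"
proof -
  let ?r = "rep_mid r1 r2"
  note K = bounded_rep_grad_sq(1)[OF r(1) r(1)] bounded_rep_grad_sq(1)[OF r(2) r(2)]
    bounded_rep_grad_sq(1)[OF bounded_rep_mid[OF r] bounded_rep_mid[OF r]]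
  have "integral {0..1} (\<lambda>t. (rep_grad r1 g t - rep_grad r2 g t)\<^sup>2) =
     2 * integral {0..1} (\<lambda>t. (rep_grad r1 g t)\<^sup>2) + 2 * integral {0..1} (\<lambda>t. (rep_grad r2 g t)\<^sup>2)
      - 4 * integral {0..1} (\<lambda>t. (rep_grad ?r g t)\<^sup>2)" if "g \<in> G0" for g
  proof -
    have "(\<lambda>t. (rep_grad r1 g t - rep_grad r2 g t)\<^sup>2)
        = (\<lambda>t. 2 * (rep_grad r1 g t)\<^sup>2 + 2 * (rep_grad r2 g t)\<^sup>2 - 4 * (rep_grad ?r g t)\<^sup>2)"
      using r by (auto simp: bounded_rep_def rep_grad_mid power2_eq_square field_simps)
    thus ?thesis using bounded_kernel_integrable_on[OF K(1) that] bounded_kernel_integrable_on[OF K(2) that]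
        bounded_kernel_integrable_on[OF K(3) that]
      by (simp add: integral_diff integral_add integrable_diff integrable_add integrable_on_cmult_left)
  qed
  hence "grad_dist r1 r2 = (\<integral>g. 2 * integral {0..1} (\<lambda>t. (rep_grad r1 g t)\<^sup>2)
      + 2 * integral {0..1} (\<lambda>t. (rep_grad r2 g t)\<^sup>2) - 4 * integral {0..1} (\<lambda>t. (rep_grad ?r g t)\<^sup>2) \<partial>Q)"
    unfolding grad_dist_def by (intro Bochner_Integration.integral_cong) (auto simp: space_eq)
  thus ?thesis
    unfolding energy_def using integrable_bounded_kernel_integral[OF K(1)]
      integrable_bounded_kernel_integral[OF K(2)] integrable_bounded_kernel_integral[OF K(3)]
    by simp
qed

lemma nn_integral_grad_dist:
  assumes "bounded_rep r1" "bounded_rep r2"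
  shows "(\<integral>\<^sup>+ g. ennreal (integral {0..1} (\<lambda>t. (rep_grad r1 g t - rep_grad r2 g t)\<^sup>2)) \<partial>Q)
    = ennreal (grad_dist r1 r2)"
  unfolding grad_dist_def
  by (intro nn_integral_eq_integral integrable_bounded_kernel_integral bounded_rep_grad_sq(2)[OF assms])
     (auto simp: integral_square_nonneg)

lemma nn_integral_square_finite:
  assumes "\<And>g. g \<in> G0 \<Longrightarrow> \<bar>u g\<bar> \<le> B"
  shows "(\<integral>\<^sup>+ g. ennreal ((u g)\<^sup>2) \<partial>Q) < \<infinity>"
proof -
  have "(\<integral>\<^sup>+ g. ennreal ((u g)\<^sup>2) \<partial>Q) \<le> (\<integral>\<^sup>+ g. ennreal (B\<^sup>2) \<partial>Q)"
    using power_mono[OF assms abs_ge_zero, of _ 2] by (intro nn_integral_mono ennreal_leI) (auto simp: space_eq)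
  also have "\<dots> < \<infinity>" by (simp add: emeasure_space_1)
  finally show ?thesis .
qed

lemma nn_integral_square_tendsto_0:
  assumes "\<And>n g. g \<in> G0 \<Longrightarrow> \<bar>h n g\<bar> \<le> c n" and "c \<longlonglongrightarrow> 0"
  shows "(\<lambda>n. \<integral>\<^sup>+ g. ennreal ((h n g)\<^sup>2) \<partial>Q) \<longlonglongrightarrow> 0"
proof (rule tendsto_sandwich[OF _ _ tendsto_const])
  show "\<forall>\<^sub>F n in sequentially. (\<integral>\<^sup>+ g. ennreal ((h n g)\<^sup>2) \<partial>Q) \<le> ennreal ((c n)\<^sup>2)"
  proof (intro always_eventually allI)
    fix n
    have "(\<integral>\<^sup>+ g. ennreal ((h n g)\<^sup>2) \<partial>Q) \<le> (\<integral>\<^sup>+ g. ennreal ((c n)\<^sup>2) \<partial>Q)"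
      using power_mono[OF assms(1) abs_ge_zero, of _ n 2]
      by (intro nn_integral_mono ennreal_leI) (auto simp: space_eq)
    thus "(\<integral>\<^sup>+ g. ennreal ((h n g)\<^sup>2) \<partial>Q) \<le> ennreal ((c n)\<^sup>2)" by (simp add: emeasure_space_1)
  qed
  show "(\<lambda>n. ennreal ((c n)\<^sup>2)) \<longlonglongrightarrow> 0"
    using tendsto_ennrealI[OF tendsto_power[OF assms(2), of 2]] by simp
qed simp

definition approximants :: "((real \<Rightarrow> real) \<Rightarrow> real) \<Rightarrow> nat \<Rightarrow> z1_rep set" where
  "approximants u N = {r. bounded_rep r \<and> (\<forall>g\<in>G0. \<bar>rep_fun r g - u g\<bar> \<le> 1 / real (Suc N))}"

lemma approximants_antimono: "N \<le> M \<Longrightarrow> approximants u M \<subseteq> approximants u N"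
  using order_trans[OF _ frac_le[of 1 1 "real (Suc N)" "real (Suc M)"]] unfolding approximants_def by auto

lemma rep_mid_approximants:
  assumes r: "r1 \<in> approximants u N" "r2 \<in> approximants u N"
  shows "rep_mid r1 r2 \<in> approximants u N"
proof -
  have "\<bar>rep_fun (rep_mid r1 r2) g - u g\<bar> \<le> 1 / real (Suc N)" if "g \<in> G0" for g
  proof -
    have "rep_fun (rep_mid r1 r2) g - u g = ((rep_fun r1 g - u g) + (rep_fun r2 g - u g)) / 2"
      using r by (simp add: approximants_def bounded_rep_def rep_fun_mid field_simps)
    thus ?thesis using r that unfolding approximants_def by fastforce
  qed
  thus ?thesis using r bounded_rep_mid unfolding approximants_def by blast
qed

lemma Dom_E_if_uniformly_approximable:
  fixes u :: "(real \<Rightarrow> real) \<Rightarrow> real"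
  assumes u_meas: "u \<in> borel_measurable Q" and u_bound: "\<And>g. g \<in> G0 \<Longrightarrow> \<bar>u g\<bar> \<le> B"
    and approx: "\<And>N. \<exists>r\<in>approximants u N. energy r \<le> C"
  shows "u \<in> Dom_E Q"
proof -
  obtain rr where rr: "\<And>N. rr N \<in> approximants u N"
    and cauchy: "\<And>e. e > 0 \<Longrightarrow> \<exists>L. \<forall>n\<ge>L. \<forall>k\<ge>L. grad_dist (rr n) (rr k) < e"
  proof (rule minimizing_sequence_cauchy[of "approximants u" rep_mid grad_dist energy C])
    show "approximants u N \<noteq> {}" for N using approx[of N] by blast
    show "grad_dist r1 r2 = 2 * energy r1 + 2 * energy r2 - 4 * energy (rep_mid r1 r2)"
      if "r1 \<in> approximants u N" "r2 \<in> approximants u N" for N r1 r2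
      using that grad_dist_parallelogram unfolding approximants_def by blast
  qed (use approx approximants_antimono rep_mid_approximants energy_nonneg in auto)
  have bounded: "bounded_rep (rr n)" for n using rr unfolding approximants_def by blast
  have fun_conv: "(\<lambda>n. \<integral>\<^sup>+ g. ennreal ((rep_fun (rr n) g - u g)\<^sup>2) \<partial>Q) \<longlonglongrightarrow> 0"
    using rr LIMSEQ_Suc[OF lim_inverse_n'] unfolding approximants_def
    by (intro nn_integral_square_tendsto_0[where c="\<lambda>n. 1 / real (Suc n)"]) auto
  have grad_cauchy: "\<exists>L. \<forall>n\<ge>L. \<forall>k\<ge>L.
      (\<integral>\<^sup>+ g. ennreal (integral {0..1} (\<lambda>t. (rep_grad (rr n) g t - rep_grad (rr k) g t)\<^sup>2)) \<partial>Q) < \<epsilon>"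
    if eps: "\<epsilon> > 0" for \<epsilon>
  proof -
    obtain e where e: "0 < e" "ennreal e < \<epsilon>"
      using dense[OF eps] less_top_ennreal by (metis ennreal_less_zero_iff order.strict_trans2 top_greatest)
    then obtain L where "\<forall>n\<ge>L. \<forall>k\<ge>L. grad_dist (rr n) (rr k) < e" using cauchy by blast
    hence "\<forall>n\<ge>L. \<forall>k\<ge>L. ennreal (grad_dist (rr n) (rr k)) < \<epsilon>"
      using e by (metis ennreal_lessI order.strict_trans)
    thus ?thesis by (auto simp: nn_integral_grad_dist[OF bounded bounded])
  qed
  show ?thesis
    unfolding Dom_E_def mem_Collect_eq
    using u_meas nn_integral_square_finite[OF u_bound] bounded fun_conv grad_cauchy
    by (intro conjI exI[of _ "\<lambda>n. fst (rr n)"] exI[of _ "\<lambda>n. fst (snd (rr n))"] exI[of _ "\<lambda>n. snd (snd (rr n))"])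
       (auto simp: bounded_rep_def rep_fun_def rep_grad_def)
qed

end

section \<open>The approximating functionals\<close>

definition bump :: "real \<Rightarrow> real" where
  "bump z = 6 * max 0 (z * (1 - z))"

lemma continuous_on_bump: "continuous_on S bump"
  unfolding bump_def by (intro continuous_intros)

lemma bump_nonneg: "0 \<le> bump z"
  unfolding bump_def by simp

lemma bump_eq_0:
  assumes "z \<le> 0 \<or> 1 \<le> z"
  shows "bump z = 0"
proof -
  have "z * (1 - z) \<le> 0" using assms by (auto simp: mult_nonpos_nonneg mult_nonneg_nonpos)
  thus ?thesis unfolding bump_def by simp
qed

lemma bump_le: "bump z \<le> 3 / 2"
proof -
  have "z * (1 - z) = 1 / 4 - (z - 1 / 2)\<^sup>2" by (simp add: power2_eq_square field_simps)
  hence "z * (1 - z) \<le> 1 / 4" by simp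
  thus ?thesis unfolding bump_def by simp
qed

lemma integral_bump: "integral {0..1} bump = 1"
proof -
  have "((\<lambda>t. 6 * t - 6 * t\<^sup>2) has_integral (3 * 1\<^sup>2 - 2 * 1 ^ 3) - (3 * 0\<^sup>2 - 2 * 0 ^ 3)) {0..1::real}"
    by (rule fundamental_theorem_of_calculus)
       (auto intro!: derivative_eq_intros simp: has_real_derivative_iff_has_vector_derivative[symmetric] power2_eq_square)
  hence "integral {0..1} (\<lambda>t::real. 6 * t - 6 * t\<^sup>2) = 1" by (simp add: integral_unique)
  moreover have "bump t = 6 * t - 6 * t\<^sup>2" if "t \<in> {0..1}" for t
  proof -
    have "0 \<le> t * (1 - t)" using that by simp
    thus ?thesis by (simp add: bump_def power2_eq_square algebra_simps)
  qed
  ultimately show ?thesis using integral_cong[of "{0..1}" bump] by simp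
qed

text \<open>On \<open>]-\<infinity>, L]\<close> the function \<open>smooth_step L\<close> is the distribution function of \<open>bump\<close>;
  the window of length \<open>L\<close> only serves to give a primitive with a uniform derivative formula.\<close>

definition smooth_step :: "real \<Rightarrow> real \<Rightarrow> real" where
  "smooth_step L z = integral {z - L..z} bump"

lemma smooth_step_deriv: "0 \<le> L \<Longrightarrow> (smooth_step L has_real_derivative (bump z - bump (z - L))) (at z)"
  unfolding smooth_step_def[abs_def] by (rule has_real_derivative_window_integral[OF continuous_on_bump])

lemma continuous_on_smooth_step: "0 \<le> L \<Longrightarrow> continuous_on S (smooth_step L)"
  using smooth_step_deriv by (meson DERIV_isCont continuous_at_imp_continuous_on)

lemma smooth_step_eq_0: "z \<le> 0 \<Longrightarrow> smooth_step L z = 0"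
  unfolding smooth_step_def by (subst integral_cong[where g="\<lambda>_. 0"]) (auto intro: bump_eq_0)

lemma smooth_step_1:
  assumes "1 \<le> L"
  shows "smooth_step L 1 = 1"
proof -
  have "bump integrable_on {1 - L..1}"
    by (intro integrable_continuous_real continuous_on_bump)
  hence "integral {1 - L..0} bump + integral {0..1} bump = integral {1 - L..1} bump"
    using assms by (intro Henstock_Kurzweil_Integration.integral_combine) auto
  moreover have "integral {1 - L..0} bump = 0"
    by (subst integral_cong[where g="\<lambda>_. 0"]) (auto intro: bump_eq_0)
  ultimately show ?thesis unfolding smooth_step_def using integral_bump by simp
qed

lemma smooth_step_mono:
  assumes L: "0 \<le> L" and ab: "a \<le> b" "b \<le> L"
  shows "smooth_step L a \<le> smooth_step L b"
proof (rule DERIV_nonneg_imp_increasing_open[OF ab(1) _ continuous_on_smooth_step[OF L]])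
  fix x assume "a < x" "x < b"
  hence "bump (x - L) = 0" using ab by (intro bump_eq_0) auto
  thus "\<exists>y. DERIV (smooth_step L) x :> y \<and> 0 \<le> y"
    using smooth_step_deriv[OF L, of x] bump_nonneg[of x] by auto
qed

lemma smooth_step_eq_1:
  assumes L: "1 \<le> L" and z: "1 \<le> z" "z \<le> L"
  shows "smooth_step L z = 1"
proof (cases "z = 1")
  case False
  hence "smooth_step L z = smooth_step L 1"
  proof (intro DERIV_isconst2[of 1 z "smooth_step L" z])
    fix x assume "1 < x" "x < z"
    hence "bump (x - L) = 0" "bump x = 0" using z by (auto intro: bump_eq_0)
    thus "DERIV (smooth_step L) x :> 0" using smooth_step_deriv[of L x] L by auto
  qed (use z L in \<open>auto intro: continuous_on_smooth_step\<close>)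
  thus ?thesis using smooth_step_1[OF L] by simp
qed (use smooth_step_1[OF L] in simp)

lemma smooth_step_range:
  assumes L: "1 \<le> L" and z: "z \<le> L"
  shows "0 \<le> smooth_step L z" "smooth_step L z \<le> 1"
proof -
  show "0 \<le> smooth_step L z"
    using smooth_step_mono[of L 0 z] smooth_step_eq_0[of z L] smooth_step_eq_0[of 0 L] L z
    by (cases "z \<le> 0") auto
  show "smooth_step L z \<le> 1"
    using smooth_step_mono[of L z 1] smooth_step_1[OF L] smooth_step_eq_1[OF L, of z] L z
    by (cases "z \<le> 1") auto
qed

text \<open>For \<open>0 \<le> x\<close> the window of \<open>smooth_step\<close> is never left, so \<open>step_coord n i\<close> is a \<open>C\<^sup>1\<close>
  version of the indicator of \<open>x \<le> i / n\<close>, with transition layer \<open>i / n \<le> x \<le> (i + 1) / n\<close>.\<close>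

definition step_coord :: "nat \<Rightarrow> nat \<Rightarrow> real \<Rightarrow> real" where
  "step_coord n i x = smooth_step (real n + 1) (real i + 1 - real n * x)"

lemma continuous_on_step_coord: "continuous_on S (step_coord n i)"
  unfolding step_coord_def[abs_def]
  by (intro continuous_on_compose2[OF continuous_on_smooth_step[of "real n + 1" UNIV]] continuous_intros) auto

lemma step_coord_arg_le:
  assumes "0 \<le> x" "i < n"
  shows "real i + 1 - real n * x \<le> real n + 1"
proof -
  have "real i < real n" "0 \<le> real n * x" using assms by simp_all
  thus ?thesis by linarith
qed

lemma step_coord_range:
  assumes "0 \<le> x" "i < n"
  shows "0 \<le> step_coord n i x" "step_coord n i x \<le> 1"
  using smooth_step_range[OF _ step_coord_arg_le[OF assms]] unfolding step_coord_def by auto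

lemma step_coord_eq_1:
  assumes "0 \<le> x" "i < n" "real n * x \<le> real i"
  shows "step_coord n i x = 1"
  unfolding step_coord_def using assms step_coord_arg_le[OF assms(1,2)] by (intro smooth_step_eq_1) auto

lemma step_coord_eq_0: "real i + 1 \<le> real n * x \<Longrightarrow> step_coord n i x = 0"
  unfolding step_coord_def by (intro smooth_step_eq_0) simp

text \<open>For nondecreasing \<open>g\<close> the integrand is essentially the indicator of an initial interval, so
  \<open>crossing_time n g i\<close> is the time at which \<open>g\<close> passes the level \<open>i / n\<close>, up to the transition layer.\<close>

definition crossing_time :: "nat \<Rightarrow> (real \<Rightarrow> real) \<Rightarrow> nat \<Rightarrow> real" where
  "crossing_time n g i = integral {0..1} (\<lambda>s. step_coord n i (g s))"

lemma integrable_on_step_coord_G0: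
  assumes "g \<in> G0" "i < n"
  shows "(\<lambda>s. step_coord n i (g s)) integrable_on {0..1}"
  using assms G0_nonneg step_coord_range
  by (intro integrable_on_Icc_if_bounded_measurable[where B=1]
      measurable_compose[OF G0_borel_measurable borel_measurable_continuous_onI[OF continuous_on_step_coord]])
     auto

lemma crossing_time_le:
  assumes g: "g \<in> G0" and t: "0 \<le> t" "t \<le> 1" and i: "i < n" and above: "real i + 2 \<le> real n * g t"
  shows "crossing_time n g i \<le> t"
proof -
  have "crossing_time n g i \<le> integral {0..1} (\<lambda>s. if s \<in> {0..t} then 1 else 0 :: real)"
    unfolding crossing_time_def
  proof (rule integral_le[OF integrable_on_step_coord_G0[OF g i] integrable_on_indicator_01])
    fix s assume s: "s \<in> {0..1::real}"
    show "step_coord n i (g s) \<le> (if s \<in> {0..t} then 1 else 0)"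
    proof (cases "s \<le> t")
      case False
      hence "real n * g t \<le> real n * g s" using s t by (intro mult_left_mono G0_mono[OF g]) auto
      thus ?thesis using above step_coord_eq_0 by simp
    qed (use step_coord_range[OF G0_nonneg[OF g] i] s in auto)
  qed
  thus ?thesis using integral_indicator_01_le[OF t(1)] by simp
qed

text \<open>The strict inequality uses right continuity: \<open>g\<close> stays below \<open>i / n\<close> a little beyond \<open>t\<close>.\<close>

lemma crossing_time_gt:
  assumes g: "g \<in> G0" and t: "0 \<le> t" "t \<le> 1" and i: "i < n" and below: "real n * g t < real i"
  shows "t < crossing_time n g i"
proof -
  have "t < 1" using t below i G0_at_1[OF g] by (cases "t = 1") auto
  have "g t < real i / real n" using below i by (simp add: field_simps)
  with G0_right_continuous[OF g t(1) \<open>t < 1\<close>]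
  have "\<forall>\<^sub>F s in at_right t. g s < real i / real n" by (intro order_tendstoD(2)) (auto simp: continuous_within)
  then obtain b where b: "t < b" "\<And>s. t < s \<Longrightarrow> s < b \<Longrightarrow> g s < real i / real n"
    unfolding eventually_at_right_field by auto
  define t' where "t' = min ((t + b) / 2) 1"
  have t': "t < t'" "t' \<le> 1" "t' < b" using b(1) \<open>t < 1\<close> unfolding t'_def by (auto simp: min_def)
  have "integral {0..1} (\<lambda>s. if s \<in> {0..t'} then 1 else 0 :: real) \<le> crossing_time n g i"
    unfolding crossing_time_def
  proof (rule integral_le[OF integrable_on_indicator_01 integrable_on_step_coord_G0[OF g i]])
    fix s assume s: "s \<in> {0..1::real}"
    show "(if s \<in> {0..t'} then 1 else 0) \<le> step_coord n i (g s)"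
    proof (cases "s \<le> t'")
      case True
      have "real n * g s \<le> real i"
      proof (cases "s \<le> t")
        case True
        hence "real n * g s \<le> real n * g t" using s t by (intro mult_left_mono G0_mono[OF g]) auto
        thus ?thesis using below by simp
      next
        case False
        hence "g s < real i / real n" using b(2) \<open>s \<le> t'\<close> t' by auto
        thus ?thesis using i by (simp add: field_simps)
      qed
      thus ?thesis using step_coord_eq_1[OF G0_nonneg[OF g] i] by simp
    qed (use step_coord_range[OF G0_nonneg[OF g] i] in auto)
  qed
  thus ?thesis using integral_indicator_01[of 0 t'] t' t by simp
qed

lemma sum_threshold_lower: "min (real n) (x - 2) \<le> (\<Sum>j<n. if real j + 2 \<le> x then 1 else 0 :: real)"
  by (induction n) (auto simp: min_def)

lemma sum_threshold_upper: "0 \<le> x \<Longrightarrow> (\<Sum>j<n. if real j \<le> x then 1 else 0 :: real) \<le> min (real n) (x + 1)"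
  by (induction n) (auto simp: min_def split: if_split_asm)

lemma crossing_count_bounds:
  assumes g: "g \<in> G0" and t: "0 \<le> t" "t \<le> 1"
  shows "real n * g t - 2 \<le> (\<Sum>j<n. indicator {crossing_time n g j..} t :: real)"
    and "(\<Sum>j<n. indicator {crossing_time n g j..} t :: real) \<le> real n * g t + 1"
proof -
  define x where "x = real n * g t"
  have x: "0 \<le> x" "x \<le> real n"
    unfolding x_def using G0_nonneg[OF g] G0_le_1[OF g, of t] by (simp_all add: mult_left_le)
  have "x - 2 \<le> (\<Sum>j<n. if real j + 2 \<le> x then 1 else 0 :: real)"
    using sum_threshold_lower[of n x] x by simp
  also have "\<dots> \<le> (\<Sum>j<n. indicator {crossing_time n g j..} t :: real)"
    using crossing_time_le[OF g t] unfolding x_def by (intro sum_mono) (auto simp: indicator_def)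
  finally show "real n * g t - 2 \<le> (\<Sum>j<n. indicator {crossing_time n g j..} t :: real)"
    unfolding x_def .
  have "(\<Sum>j<n. indicator {crossing_time n g j..} t :: real) \<le> (\<Sum>j<n. if real j \<le> x then 1 else 0 :: real)"
    using crossing_time_gt[OF g t] unfolding x_def by (intro sum_mono) (force simp: indicator_def)
  also have "\<dots> \<le> x + 1" using sum_threshold_upper[OF x(1), of n] by simp
  finally show "(\<Sum>j<n. indicator {crossing_time n g j..} t :: real) \<le> real n * g t + 1"
    unfolding x_def .
qed

lemma step_coord_has_derivative:
  "(step_coord n i has_real_derivative
     - real n * (bump (real i + 1 - real n * x) - bump (real i + 1 - real n * x - (real n + 1)))) (at x)"
proof -
  have "((\<lambda>x. smooth_step (real n + 1) (real i + 1 - real n * x)) has_real_derivative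
      (bump (real i + 1 - real n * x) - bump (real i + 1 - real n * x - (real n + 1))) * (- real n)) (at x)"
    by (rule DERIV_chain2[where f="smooth_step (real n + 1)", OF smooth_step_deriv])
       (auto intro!: derivative_eq_intros)
  thus ?thesis unfolding step_coord_def[abs_def] by (simp add: mult.commute)
qed

lemma step_coord_C1: "step_coord n i C1_differentiable_on S"
  unfolding C1_differentiable_on_def has_real_derivative_iff_has_vector_derivative[symmetric]
  by (intro exI[of _ "\<lambda>x. - real n * (bump (real i + 1 - real n * x) - bump (real i + 1 - real n * x - (real n + 1)))"]
      conjI ballI step_coord_has_derivative continuous_intros continuous_on_compose2[OF continuous_on_bump[of UNIV]])
     auto

lemma deriv_step_coord:
  assumes "0 \<le> x" "i < n"
  shows "deriv (step_coord n i) x = - real n * bump (real i + 1 - real n * x)"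
  using DERIV_imp_deriv[OF step_coord_has_derivative] step_coord_arg_le[OF assms]
  by (simp add: bump_eq_0)

text \<open>At most one shift of \<open>bump\<close> is nonzero at a given point, so the sum is bounded by the maximum of \<open>bump\<close>.\<close>

lemma sum_bump_shifts_le:
  assumes "0 \<le> y"
  shows "(\<Sum>i<n. bump (real i + 1 - y)) \<le> 3 / 2"
proof -
  define k where "k = nat \<lfloor>y\<rfloor>"
  have ky: "real k \<le> y" "y < real k + 1" unfolding k_def using assms by linarith+
  have "bump (real i + 1 - y) = 0" if "i \<noteq> k" for i
  proof -
    have "real i + 1 \<le> real k \<or> real k + 1 \<le> real i" using that by linarith
    thus ?thesis using ky by (intro bump_eq_0) auto
  qed
  hence "(\<Sum>i<n. bump (real i + 1 - y)) = (\<Sum>i<n. if i = k then bump (real k + 1 - y) else 0)"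
    by (intro sum.cong) auto
  also have "\<dots> \<le> 3 / 2" using bump_le bump_nonneg by (simp add: sum.delta)
  finally show ?thesis .
qed

locale unit_weight =
  fixes f :: "real \<Rightarrow> real"
  assumes weight_measurable: "f \<in> borel_measurable borel" and weight_bound: "\<And>t. \<bar>f t\<bar> \<le> 1"
begin

definition tail :: "real \<Rightarrow> real" where
  "tail y = integral {0..1} (\<lambda>t. f t * indicator {y..} t)"

text \<open>The outer function must be \<open>C\<^sup>1\<close>, so the Lipschitz function \<open>tail\<close> enters through its averages
  over \<open>[y, y + 1 / n]\<close>.\<close>

definition tail_avg :: "nat \<Rightarrow> real \<Rightarrow> real" where
  "tail_avg n y = real n * integral {y..y + 1 / real n} tail"

definition tail_slope :: "nat \<Rightarrow> real \<Rightarrow> real" where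
  "tail_slope n y = real n * (tail (y + 1 / real n) - tail y)"

lemma integrable_on_weight_indicator: "(\<lambda>t. f t * indicator {y..} t) integrable_on {0..1}"
  using weight_measurable weight_bound
  by (intro integrable_on_Icc_if_bounded_measurable[where B=1] borel_measurable_times)
     (auto simp: indicator_def)

lemma tail_lipschitz: "\<bar>tail y - tail y'\<bar> \<le> \<bar>y - y'\<bar>"
proof -
  have "\<bar>tail a - tail b\<bar> \<le> b - a" if "a \<le> b" for a b
  proof -
    have "tail a - tail b = integral {0..1} (\<lambda>t. f t * indicator {a..} t - f t * indicator {b..} t)"
      unfolding tail_def by (rule integral_diff[symmetric]) (intro integrable_on_weight_indicator)+
    also have "norm \<dots> \<le> integral {0..1} (\<lambda>t. if t \<in> {a..b} then 1 else 0)"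
      using weight_bound that
      by (intro integral_norm_bound_integral integrable_diff integrable_on_weight_indicator
          integrable_on_indicator_01)
         (auto simp: indicator_def)
    also have "\<dots> \<le> b - a"
      using integral_indicator_01_le that .
    finally show ?thesis by simp
  qed
  from this[of y y'] this[of y' y] show ?thesis by (cases "y \<le> y'") (auto simp: abs_minus_commute)
qed

lemma continuous_on_tail: "continuous_on S tail"
proof (rule lipschitz_on_continuous_on)
  show "1-lipschitz_on S tail"
    by (rule lipschitz_onI) (auto simp: dist_real_def tail_lipschitz)
qed

lemma continuous_on_tail_slope: "continuous_on S (tail_slope n)"
  unfolding tail_slope_def[abs_def]
  by (intro continuous_intros continuous_on_compose2[OF continuous_on_tail[of UNIV]]) auto

lemma tail_avg_deriv:
  assumes "0 < n"
  shows "(tail_avg n has_real_derivative tail_slope n y) (at y)"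
proof -
  define h where "h = 1 / real n"
  have "((\<lambda>z. integral {z - h..z} tail) has_real_derivative (tail (y + h) - tail (y + h - h))) (at (y + h))"
    by (rule has_real_derivative_window_integral[OF continuous_on_tail]) (simp add: h_def)
  hence "((\<lambda>y. integral {(y + h) - h..y + h} tail) has_real_derivative (tail (y + h) - tail y) * 1) (at y)"
    by (intro DERIV_chain2[where f="\<lambda>z. integral {z - h..z} tail"]) (auto intro!: derivative_eq_intros)
  hence "((\<lambda>y. integral {y..y + h} tail) has_real_derivative (tail (y + h) - tail y)) (at y)"
    by simp
  from DERIV_cmult[OF this, of "real n"] show ?thesis
    unfolding tail_avg_def[abs_def] tail_slope_def h_def .
qed

lemma abs_tail_slope_le:
  assumes "0 < n"
  shows "\<bar>tail_slope n y\<bar> \<le> 1"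
proof -
  have "real n * \<bar>tail (y + 1 / real n) - tail y\<bar> \<le> real n * (1 / real n)"
    using tail_lipschitz[of "y + 1 / real n" y] by (intro mult_left_mono) auto
  thus ?thesis using assms unfolding tail_slope_def by (simp add: abs_mult)
qed

lemma tail_avg_approx:
  assumes "0 < n"
  shows "\<bar>tail_avg n y - tail y\<bar> \<le> 1 / real n"
proof -
  define h where "h = 1 / real n"
  have h: "0 < h" "real n * h = 1" using assms unfolding h_def by simp_all
  have "tail integrable_on {y..y + h}" "(\<lambda>_. tail y) integrable_on {y..y + h}"
    by (auto intro: integrable_continuous_real continuous_on_tail)
  hence "integral {y..y + h} tail = h * tail y + integral {y..y + h} (\<lambda>s. tail s - tail y)"
    and int_diff: "(\<lambda>s. tail s - tail y) integrable_on {y..y + h}"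
    using h by (simp_all add: integral_diff integrable_diff)
  hence "tail_avg n y - tail y = real n * integral {y..y + h} (\<lambda>s. tail s - tail y)"
    using h unfolding tail_avg_def h_def[symmetric] by (simp add: algebra_simps mult.assoc[symmetric])
  moreover have "\<bar>integral {y..y + h} (\<lambda>s. tail s - tail y)\<bar> \<le> h * (y + h - y)"
    using h by (intro abs_integral_Icc_le[OF int_diff]) (auto intro: order_trans[OF tail_lipschitz])
  ultimately have "\<bar>tail_avg n y - tail y\<bar> \<le> real n * (h * h)"
    by (simp add: abs_mult mult_left_mono)
  thus ?thesis using h unfolding h_def by simp
qed

definition U_approx :: "nat \<Rightarrow> (nat \<Rightarrow> real) \<Rightarrow> real" where
  "U_approx n y = (\<Sum>j<n. tail_avg n (y j)) / real n"

lemma U_approx_has_partial_derivative: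
  assumes "0 < n" "i < n"
  shows "((\<lambda>h. U_approx n (x(i := h))) has_real_derivative tail_slope n (x i) / real n) (at (x i))"
proof -
  define c where "c = (\<Sum>j\<in>{..<n} - {i}. tail_avg n (x j))"
  have "(\<Sum>j<n. tail_avg n ((x(i := h)) j)) = tail_avg n h + c" for h
    using assms(2) unfolding c_def by (subst sum.remove[of _ i]) (auto intro!: sum.cong)
  hence "(\<lambda>h. U_approx n (x(i := h))) = (\<lambda>h. (tail_avg n h + c) / real n)"
    unfolding U_approx_def by simp
  thus ?thesis using assms(1) by (auto intro!: derivative_eq_intros tail_avg_deriv)
qed

lemma partial_i_U_approx: "0 < n \<Longrightarrow> i < n \<Longrightarrow> partial_i (U_approx n) x i = tail_slope n (x i) / real n"
  unfolding partial_i_def by (rule DERIV_imp_deriv[OF U_approx_has_partial_derivative])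

lemma Z1_rep_U_approx:
  assumes n: "0 < n"
  shows "Z1_rep n (U_approx n) (step_coord n)"
  unfolding Z1_rep_def C1_Rm_def
proof (intro conjI allI impI ballI step_coord_C1)
  fix i x assume "i < n"
  thus "(\<lambda>h. U_approx n (x(i := h))) differentiable (at (x i))"
    using U_approx_has_partial_derivative[OF n] real_differentiable_def by blast
next
  fix i assume "i < n"
  have "continuous_on (Rm n) (\<lambda>x. tail_slope n (x i) / real n)"
    by (intro continuous_intros continuous_on_compose2[OF continuous_on_tail_slope[of UNIV n]]
        continuous_on_subset[OF continuous_on_product_coordinates]) (use n in auto)
  thus "continuous_on (Rm n) (\<lambda>x. partial_i (U_approx n) x i)"
    by (rule continuous_on_eq) (simp add: partial_i_U_approx[OF n \<open>i < n\<close>])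
qed

lemma z1_grad_U_approx:
  assumes n: "0 < n" and g: "g \<in> G0"
  shows "z1_grad n (U_approx n) (step_coord n) g t
    = - (\<Sum>i<n. tail_slope n (crossing_time n g i) * bump (real i + 1 - real n * g t))"
proof -
  have "z1_grad n (U_approx n) (step_coord n) g t
      = (\<Sum>i<n. (tail_slope n (crossing_time n g i) / real n) * (- real n * bump (real i + 1 - real n * g t)))"
    unfolding z1_grad_def using n
    by (intro sum.cong) (auto simp: partial_i_U_approx deriv_step_coord[OF G0_nonneg[OF g]] z1_vec_def crossing_time_def)
  thus ?thesis using n by (simp add: sum_negf[symmetric])
qed

lemma abs_z1_grad_U_approx_le:
  assumes n: "0 < n" and g: "g \<in> G0"
  shows "\<bar>z1_grad n (U_approx n) (step_coord n) g t\<bar> \<le> 3 / 2"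
proof -
  have "\<bar>\<Sum>i<n. tail_slope n (crossing_time n g i) * bump (real i + 1 - real n * g t)\<bar>
      \<le> (\<Sum>i<n. bump (real i + 1 - real n * g t))"
    using abs_tail_slope_le[OF n] bump_nonneg
    by (intro order_trans[OF sum_abs sum_mono]) (auto simp: abs_mult intro: mult_left_le_one_le)
  also have "\<dots> \<le> 3 / 2" using G0_nonneg[OF g, of t] by (intro sum_bump_shifts_le) simp
  finally show ?thesis unfolding z1_grad_U_approx[OF n g] by simp
qed


lemma integrable_on_weight_G0:
  assumes "g \<in> G0"
  shows "(\<lambda>t. f t * g t) integrable_on {0..1}"
  using weight_bound G0_abs_le_1[OF assms]
  by (intro integrable_on_Icc_if_bounded_measurable[where B=1] borel_measurable_times
      weight_measurable G0_borel_measurable[OF assms])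
     (auto simp: abs_mult mult_le_one)

lemma sum_tail_eq_integral:
  fixes n :: nat
  shows "(\<Sum>j<n. tail (c j)) = integral {0..1} (\<lambda>t. f t * (\<Sum>j<n. indicator {c j..} t))"
  unfolding tail_def sum_distrib_left
  by (rule Henstock_Kurzweil_Integration.integral_sum[symmetric]) (auto intro: integrable_on_weight_indicator)

text \<open>The value of the approximant is \<open>1/n\<close> times a sum of \<open>tail\<close> values at the crossing times, up to
  an error \<open>1/n\<close>; that sum integrates \<open>f\<close> against the number of crossing times below \<open>t\<close>, which is
  \<open>n g t\<close> up to \<open>2\<close>.\<close>

lemma z1_fun_U_approx_error:
  assumes n: "0 < n" and g: "g \<in> G0"
  shows "\<bar>z1_fun n (U_approx n) (step_coord n) g - integral {0..1} (\<lambda>t. f t * g t)\<bar> \<le> 3 / real n"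
proof -
  define T where "T j = crossing_time n g j" for j
  define count where "count t = (\<Sum>j<n. indicator {T j..} t :: real)" for t
  have approx_value: "z1_fun n (U_approx n) (step_coord n) g = (\<Sum>j<n. tail_avg n (T j)) / real n"
    unfolding z1_fun_def U_approx_def T_def z1_vec_def crossing_time_def by simp
  have "\<bar>(\<Sum>j<n. tail_avg n (T j)) - (\<Sum>j<n. tail (T j))\<bar> \<le> real (card {..<n}) * (1 / real n)"
    unfolding sum_subtractf[symmetric] by (intro order_trans[OF sum_abs sum_bounded_above] tail_avg_approx n)
  hence avg: "\<bar>(\<Sum>j<n. tail_avg n (T j)) - (\<Sum>j<n. tail (T j))\<bar> \<le> 1" using n by simp
  have int_count: "(\<lambda>t. f t * count t) integrable_on {0..1}"
    unfolding count_def sum_distrib_left by (intro integrable_sum integrable_on_weight_indicator) simp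
  have "(\<Sum>j<n. tail (T j)) - real n * integral {0..1} (\<lambda>t. f t * g t)
      = integral {0..1} (\<lambda>t. f t * count t - real n * (f t * g t))"
    unfolding sum_tail_eq_integral count_def[symmetric]
    using int_count integrable_on_mult_right[OF integrable_on_weight_G0[OF g]]
    by (simp add: integral_diff)
  also have "\<bar>\<dots>\<bar> \<le> 2 * (1 - 0)"
  proof (intro abs_integral_Icc_le integrable_diff int_count integrable_on_mult_right integrable_on_weight_G0[OF g])
    fix t :: real assume t: "t \<in> {0..1}"
    have "\<bar>count t - real n * g t\<bar> \<le> 2"
      using crossing_count_bounds[OF g, of t n] t unfolding count_def T_def by auto
    hence "\<bar>f t\<bar> * \<bar>count t - real n * g t\<bar> \<le> 1 * 2"
      using weight_bound by (intro mult_mono) auto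
    thus "\<bar>f t * count t - real n * (f t * g t)\<bar> \<le> 2" by (simp add: abs_mult[symmetric] algebra_simps)
  qed simp
  finally have "\<bar>(\<Sum>j<n. tail_avg n (T j)) - real n * integral {0..1} (\<lambda>t. f t * g t)\<bar> \<le> 3"
    using avg by (simp add: abs_le_iff)
  hence "\<bar>(\<Sum>j<n. tail_avg n (T j)) - real n * integral {0..1} (\<lambda>t. f t * g t)\<bar> / real n \<le> 3 / real n"
    by (intro divide_right_mono) auto
  thus ?thesis unfolding approx_value using n by (simp add: field_simps)
qed

end

section \<open>Bounded energy of the approximants\<close>

context prob_on_G0
begin

lemma borel_measurable_comp_eval_pair:
  assumes "continuous_on UNIV h"
  shows "(\<lambda>(g, t). h (g t)) \<in> borel_measurable (Q \<Otimes>\<^sub>M lborel)"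
  using measurable_compose[OF borel_measurable_eval_pair borel_measurable_continuous_onI[OF assms]]
  by (simp add: case_prod_beta')

lemma borel_measurable_crossing_time: "i < n \<Longrightarrow> (\<lambda>g. crossing_time n g i) \<in> borel_measurable Q"
  unfolding crossing_time_def
  by (intro borel_measurable_bounded_kernel_integral bounded_kernelI[where B=1]
      borel_measurable_comp_eval_pair continuous_on_step_coord)
     (auto simp: G0_nonneg step_coord_range)

lemma bounded_rep_U_approx:
  assumes "unit_weight f" and n: "0 < n"
  shows "bounded_rep (n, unit_weight.U_approx f n, step_coord n)"
proof -
  interpret unit_weight f by fact
  let ?D = "\<lambda>g t. - (\<Sum>i<n. tail_slope n (crossing_time n g i) * bump (real i + 1 - real n * g t))"
  have "(\<lambda>x. ?D (fst x) (snd x)) \<in> borel_measurable (Q \<Otimes>\<^sub>M lborel)"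
  proof (intro borel_measurable_uminus borel_measurable_sum borel_measurable_times)
    fix i assume "i \<in> {..<n}"
    show "(\<lambda>x. tail_slope n (crossing_time n (fst x) i)) \<in> borel_measurable (Q \<Otimes>\<^sub>M lborel)"
      using \<open>i \<in> {..<n}\<close>
      by (intro measurable_compose[OF measurable_fst borel_measurable_crossing_time]
          measurable_compose[OF _ borel_measurable_continuous_onI[OF continuous_on_tail_slope]]) auto
    have "continuous_on UNIV (\<lambda>v. bump (real i + 1 - real n * v))"
      by (intro continuous_on_compose2[OF continuous_on_bump] continuous_intros) auto
    from borel_measurable_comp_eval_pair[OF this]
    show "(\<lambda>x. bump (real i + 1 - real n * fst x (snd x))) \<in> borel_measurable (Q \<Otimes>\<^sub>M lborel)"
      by (simp add: case_prod_beta')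
  qed
  hence "(\<lambda>(g, t). rep_grad (n, U_approx n, step_coord n) g t) \<in> borel_measurable (Q \<Otimes>\<^sub>M lborel)"
    by (rule measurable_cong[THEN iffD1, rotated])
       (auto simp: space_pair_measure space_eq rep_grad_def z1_grad_U_approx[OF n] split: prod.split)
  thus ?thesis unfolding bounded_rep_def
    using Z1_rep_U_approx[OF n] abs_z1_grad_U_approx_le[OF n]
    by (auto simp: rep_grad_def intro!: bounded_kernelI[where B="3 / 2"])
qed

lemma energy_U_approx_le:
  assumes "unit_weight f" and n: "0 < n"
  shows "energy (n, unit_weight.U_approx f n, step_coord n) \<le> 9 / 4"
proof -
  interpret unit_weight f by fact
  let ?r = "(n, U_approx n, step_coord n)"
  have bounded: "bounded_kernel (\<lambda>g t. (rep_grad ?r g t)\<^sup>2)"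
    using bounded_rep_grad_sq(1)[OF bounded_rep_U_approx[OF assms] bounded_rep_U_approx[OF assms]] .
  have "\<bar>(rep_grad ?r g t)\<^sup>2\<bar> \<le> 9 / 4" if "g \<in> G0" for g t
    using power_mono[OF abs_z1_grad_U_approx_le[OF n that, of t] abs_ge_zero, of 2]
    by (simp add: rep_grad_def power2_eq_square)
  hence "integral {0..1} (\<lambda>t. (rep_grad ?r g t)\<^sup>2) \<le> 9 / 4" if "g \<in> G0" for g
    using abs_integral_Icc_le[OF bounded_kernel_integrable_on[OF bounded that]] that by fastforce
  hence "energy ?r \<le> (\<integral>g. 9 / 4 \<partial>Q)"
    unfolding energy_def
    by (intro integral_mono integrable_bounded_kernel_integral[OF bounded]) (auto simp: space_eq)
  thus ?thesis by (simp add: prob_space)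
qed

lemma Dom_E_weight_integral:
  assumes "unit_weight f"
  shows "(\<lambda>g. integral {0..1} (\<lambda>t. f t * g t)) \<in> Dom_E Q"
proof -
  interpret unit_weight f by fact
  have kernel: "bounded_kernel (\<lambda>g t. f t * g t)"
  proof (rule bounded_kernelI[where B=1])
    have "f \<in> borel_measurable lborel" using weight_measurable by simp
    thus "(\<lambda>(g, t). f t * g t) \<in> borel_measurable (Q \<Otimes>\<^sub>M lborel)"
      using borel_measurable_eval_pair unfolding case_prod_beta'
      by (intro borel_measurable_times measurable_compose[OF measurable_snd]) auto
    show "\<bar>f t * g t\<bar> \<le> 1" if "g \<in> G0" for g t
      using weight_bound[of t] G0_abs_le_1[OF that, of t] by (simp add: abs_mult mult_le_one)
  qed
  show ?thesis
  proof (rule Dom_E_if_uniformly_approximable[where B=1 and C="9 / 4"])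
    show "(\<lambda>g. integral {0..1} (\<lambda>t. f t * g t)) \<in> borel_measurable Q"
      by (rule borel_measurable_bounded_kernel_integral[OF kernel])
    show "\<bar>integral {0..1} (\<lambda>t. f t * g t)\<bar> \<le> 1" if "g \<in> G0" for g
      using abs_integral_Icc_le[OF integrable_on_weight_G0[OF that], of 1] weight_bound G0_abs_le_1[OF that]
      by (simp add: abs_mult mult_le_one)
    fix N
    define n where "n = 3 * Suc N"
    have n: "0 < n" "3 / real n = 1 / real (Suc N)" unfolding n_def by (simp_all add: field_simps)
    show "\<exists>r\<in>approximants (\<lambda>g. integral {0..1} (\<lambda>t. f t * g t)) N. energy r \<le> 9 / 4"
      using bounded_rep_U_approx[OF assms n(1)] energy_U_approx_le[OF assms n(1)]
        z1_fun_U_approx_error[OF n(1)] n(2)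
      by (intro bexI[of _ "(n, U_approx n, step_coord n)"]) (auto simp: approximants_def rep_fun_def)
  qed
qed

end

theorem lemma7p6:
  fixes \<beta> :: real and Q :: "(real \<Rightarrow> real) measure" and f :: "real \<Rightarrow> real"
  assumes "\<beta> > 0" and "is_Q0 \<beta> Q" and "f \<in> G0"
  shows "(\<lambda>g. integral {0..1} (\<lambda>t. f t * g t)) \<in> Dom_E Q"
proof -
  interpret prob_on_G0 Q
    using assms(2) unfolding is_Q0_def prob_on_G0_def prob_on_G0_axioms_def by blast
  have "unit_weight f"
    using assms(3) by unfold_locales (auto intro: G0_borel_measurable G0_abs_le_1)
  thus ?thesis by (rule Dom_E_weight_integral)
qed

end
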